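(* Let $F$ be a special multifield and $F^\bullet=F\setminus\{0\}$. Define a relation on $F^\bullet\times F^\bullet$ by $\langle a,b\rangle\equiv\langle c,d\rangle$ iff $ab=cd$ and $a\in c+d$. Then $(F^\bullet,\equiv,-1)$ is a special group.
   Context: A multiring is a tuple $(R,+,\cdot,-,0,1)$ with $+:R\times R\to\mathcal P(R)\setminus\{\emptyset\}$ satisfying: $z\in x+y\Rightarrow x\in z+(-y)$ and $y\in(-x)+z$; $y\in0+x\iff y=x$; $(x+y)+z=x+(y+z)$ (with $Z+w=\bigcup_{z\in Z}(z+w)$); $x+y=y+x$; $(R,\cdot,1)$ a commutative monoid; $a0=0$; $c\in a+b\Rightarrow cd\in ad+bd$. A multifield is a multiring with every nonzero element invertible. A special multifield is a multifield $F$ such that, with $F^\bullet=F\setminus\{0\}$: (i) $a^2=1$ for all $a\in F^\bullet$; (ii) $a+(-a)=F$ for all $a\in F^\bullet$; (iii) for $a,b,c,d\in F^\bullet$, $ab=cd$ and $a\in c+d$ imply $c\in a+b$; (iv) for $a,\dots,f\in F^\bullet$, $ab=cd=ef$, $a\in c+d$, $c\in e+f$ imply $a\in e+f$; (v) for $a,b,c,d\in F^\bullet$, if there are $x,y,z\in F^\bullet$ with $ax=cy$, $a=xz$, $c=yz$, $a\in c+y$, $b\in x+z$, $d\in y+z$, then there are $t,v,w\in F^\bullet$ with $bt=cv$, $b=tw$, $c=vw$, $b\in c+v$, $a\in t+w$, $d\in v+w$. A special group is a tuple $(G,-1,\equiv)$ where $G$ is a group with $g^2=1$ for all $g$, $-1\in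 G$, and $\equiv$ a relation on $G\times G$ such that: (SG0) $\equiv$ is an equivalence relation; (SG1) $\langle a,b\rangle\equiv\langle b,a\rangle$; (SG2) $\langle a,-a\rangle\equiv\langle1,-1\rangle$ with $-a=(-1)a$; (SG3) $\langle a,b\rangle\equiv\langle c,d\rangle\Rightarrow ab=cd$; (SG4) $\langle a,b\rangle\equiv\langle c,d\rangle\Rightarrow\langle a,-c\rangle\equiv\langle -b,d\rangle$; (SG5) $\langle a,b\rangle\equiv\langle c,d\rangle\Rightarrow\langle ga,gb\rangle\equiv\langle gc,gd\rangle$; (SG6) the relation on $G^3$ given by $\langle a_1,a_2,a_3\rangle\equiv\langle b_1,b_2,b_3\rangle$ iff $\exists x,y,z$ with $\langle a_1,x\rangle\equiv\langle b_1,y\rangle$, $\langle a_2,a_3\rangle\equiv\langle x,z\rangle$, $\langle b_2,b_3\rangle\equiv\langle y,z\rangle$ is transitive. *)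

theory Defs
  imports "HOL-Algebra.Group"
begin

definition set_add :: "('a \<Rightarrow> 'a \<Rightarrow> 'a set) \<Rightarrow> 'a set \<Rightarrow> 'a \<Rightarrow> 'a set" where
  "set_add add Z w = (\<Union>z\<in>Z. add z w)"

definition multiring ::
  "'a set \<Rightarrow> ('a \<Rightarrow> 'a \<Rightarrow> 'a set) \<Rightarrow> ('a \<Rightarrow> 'a \<Rightarrow> 'a) \<Rightarrow> ('a \<Rightarrow> 'a) \<Rightarrow> 'a \<Rightarrow> 'a \<Rightarrow> bool" where
  "multiring R add mul neg zero un \<longleftrightarrow>
     zero \<in> R \<and> un \<in> R \<and>
     (\<forall>x\<in>R. neg x \<in> R) \<and>
     (\<forall>x\<in>R. \<forall>y\<in>R. mul x y \<in> R) \<and>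
     (\<forall>x\<in>R. \<forall>y\<in>R. add x y \<subseteq> R \<and> add x y \<noteq> {}) \<and>
     (\<forall>x\<in>R. \<forall>y\<in>R. \<forall>z\<in>R. z \<in> add x y \<longrightarrow>
         x \<in> add z (neg y) \<and> y \<in> add (neg x) z) \<and>
     (\<forall>x\<in>R. \<forall>y\<in>R. y \<in> add zero x \<longleftrightarrow> y = x) \<and>
     (\<forall>x\<in>R. \<forall>y\<in>R. \<forall>z\<in>R. set_add add (add x y) z = (\<Union>u\<in>add y z. add x u)) \<and>
     (\<forall>x\<in>R. \<forall>y\<in>R. add x y = add y x) \<and>
     (\<forall>x\<in>R. \<forall>y\<in>R. \<forall>z\<in>R. mul (mul x y) z = mul x (mul y z)) \<and>
     (\<forall>x\<in>R. \<forall>y\<in>R. mul x y = mul y x) \<and>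
     (\<forall>x\<in>R. mul un x = x) \<and>
     (\<forall>a\<in>R. mul a zero = zero) \<and>
     (\<forall>a\<in>R. \<forall>b\<in>R. \<forall>c\<in>R. \<forall>d\<in>R. c \<in> add a b \<longrightarrow> mul c d \<in> add (mul a d) (mul b d))"

definition multifield ::
  "'a set \<Rightarrow> ('a \<Rightarrow> 'a \<Rightarrow> 'a set) \<Rightarrow> ('a \<Rightarrow> 'a \<Rightarrow> 'a) \<Rightarrow> ('a \<Rightarrow> 'a) \<Rightarrow> 'a \<Rightarrow> 'a \<Rightarrow> bool" where
  "multifield R add mul neg zero un \<longleftrightarrow>
     multiring R add mul neg zero un \<and> zero \<noteq> un \<and>
     (\<forall>a\<in>R - {zero}. \<exists>b\<in>R. mul a b = un)"

definition special_multifield ::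
  "'a set \<Rightarrow> ('a \<Rightarrow> 'a \<Rightarrow> 'a set) \<Rightarrow> ('a \<Rightarrow> 'a \<Rightarrow> 'a) \<Rightarrow> ('a \<Rightarrow> 'a) \<Rightarrow> 'a \<Rightarrow> 'a \<Rightarrow> bool" where
  "special_multifield F add mul neg zero un \<longleftrightarrow>
     multifield F add mul neg zero un \<and>
     (let Fb = F - {zero} in
       (\<forall>a\<in>Fb. mul a a = un) \<and>
       (\<forall>a\<in>Fb. add a (neg a) = F) \<and>
       (\<forall>a\<in>Fb. \<forall>b\<in>Fb. \<forall>c\<in>Fb. \<forall>d\<in>Fb.
          mul a b = mul c d \<and> a \<in> add c d \<longrightarrow> c \<in> add a b) \<and>
       (\<forall>a\<in>Fb. \<forall>b\<in>Fb. \<forall>c\<in>Fb. \<forall>d\<in>Fb. \<forall>e\<in>Fb. \<forall>f\<in>Fb.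
          mul a b = mul c d \<and> mul c d = mul e f \<and> a \<in> add c d \<and> c \<in> add e f
          \<longrightarrow> a \<in> add e f) \<and>
       (\<forall>a\<in>Fb. \<forall>b\<in>Fb. \<forall>c\<in>Fb. \<forall>d\<in>Fb.
          (\<exists>x\<in>Fb. \<exists>y\<in>Fb. \<exists>z\<in>Fb. mul a x = mul c y \<and> a = mul x z \<and> c = mul y z \<and>
               a \<in> add c y \<and> b \<in> add x z \<and> d \<in> add y z)
          \<longrightarrow> (\<exists>t\<in>Fb. \<exists>v\<in>Fb. \<exists>w\<in>Fb. mul b t = mul c v \<and> b = mul t w \<and> c = mul v w \<and>
               b \<in> add c v \<and> a \<in> add t w \<and> d \<in> add v w)))"

text \<open>Special group (G, -1, equiv), with group operation m and unit e; the relation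
  eqv is on G x G, written eqv (a,b) (c,d) for <a,b> == <c,d>.\<close>
definition sg_eq3 :: "'a set \<Rightarrow> ('a \<times> 'a \<Rightarrow> 'a \<times> 'a \<Rightarrow> bool) \<Rightarrow> 'a \<times> 'a \<times> 'a \<Rightarrow> 'a \<times> 'a \<times> 'a \<Rightarrow> bool" where
  "sg_eq3 G eqv = (\<lambda>(a1,a2,a3) (b1,b2,b3).
     \<exists>x\<in>G. \<exists>y\<in>G. \<exists>z\<in>G. eqv (a1,x) (b1,y) \<and> eqv (a2,a3) (x,z) \<and> eqv (b2,b3) (y,z))"

definition special_group ::
  "'a set \<Rightarrow> ('a \<Rightarrow> 'a \<Rightarrow> 'a) \<Rightarrow> 'a \<Rightarrow> 'a \<Rightarrow> ('a \<times> 'a \<Rightarrow> 'a \<times> 'a \<Rightarrow> bool) \<Rightarrow> bool" where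
  "special_group G m e mone eqv \<longleftrightarrow>
     group \<lparr>carrier = G, mult = m, one = e\<rparr> \<and>
     (\<forall>g\<in>G. m g g = e) \<and>
     mone \<in> G \<and>
     (\<forall>p q. eqv p q \<longrightarrow> p \<in> G \<times> G \<and> q \<in> G \<times> G) \<and>
     \<comment> \<open>SG0\<close>
     (\<forall>p\<in>G \<times> G. eqv p p) \<and>
     (\<forall>p\<in>G \<times> G. \<forall>q\<in>G \<times> G. eqv p q \<longrightarrow> eqv q p) \<and>
     (\<forall>p\<in>G \<times> G. \<forall>q\<in>G \<times> G. \<forall>r\<in>G \<times> G. eqv p q \<and> eqv q r \<longrightarrow> eqv p r) \<and>
     \<comment> \<open>SG1\<close>
     (\<forall>a\<in>G. \<forall>b\<in>G. eqv (a,b) (b,a)) \<and>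
     \<comment> \<open>SG2\<close>
     (\<forall>a\<in>G. eqv (a, m mone a) (e, mone)) \<and>
     \<comment> \<open>SG3\<close>
     (\<forall>a\<in>G. \<forall>b\<in>G. \<forall>c\<in>G. \<forall>d\<in>G. eqv (a,b) (c,d) \<longrightarrow> m a b = m c d) \<and>
     \<comment> \<open>SG4\<close>
     (\<forall>a\<in>G. \<forall>b\<in>G. \<forall>c\<in>G. \<forall>d\<in>G. eqv (a,b) (c,d) \<longrightarrow> eqv (a, m mone c) (m mone b, d)) \<and>
     \<comment> \<open>SG5\<close>
     (\<forall>a\<in>G. \<forall>b\<in>G. \<forall>c\<in>G. \<forall>d\<in>G. \<forall>g\<in>G. eqv (a,b) (c,d) \<longrightarrow> eqv (m g a, m g b) (m g c, m g d)) \<and>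
     \<comment> \<open>SG6\<close>
     (\<forall>p\<in>G \<times> G \<times> G. \<forall>q\<in>G \<times> G \<times> G. \<forall>r\<in>G \<times> G \<times> G.
        sg_eq3 G eqv p q \<and> sg_eq3 G eqv q r \<longrightarrow> sg_eq3 G eqv p r)"

end

theory Submission
  imports Defs
begin

text \<open>
  Binary isometry is an equivalence relation by axioms (iii) and (iv), and the remaining
  binary axioms SG1, SG2, SG4, SG5 are short computations using \<open>a\<cdot>a = 1\<close>. The substance
  is SG6. The ternary relation is symmetric, and each binary piece of a ternary witness can
  be replaced by an isometric one; hence transitivity follows once the ternary relation is
  invariant under permuting the entries of a triple. Swapping the last two entries is
  immediate. For the first two, scale both triples by the product \<open>p = a\<^sub>1a\<^sub>2a\<^sub>3\<close>: after
  scaling the product is \<open>1\<close>, so \<open>a\<^sub>1 = a\<^sub>2a\<^sub>3 = xz\<close> for the witness, which is precisely the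
  situation of axiom (v), and (v) returns a witness for the swapped triple.
\<close>

locale multiring_structure =
  fixes R :: "'a set" and add :: "'a \<Rightarrow> 'a \<Rightarrow> 'a set" and mul :: "'a \<Rightarrow> 'a \<Rightarrow> 'a"
    and neg :: "'a \<Rightarrow> 'a" and zero :: 'a and un :: 'a
  assumes multiring: "multiring R add mul neg zero un"
begin

lemma zero_closed [simp]: "zero \<in> R"
  and un_closed [simp]: "un \<in> R"
  and neg_closed [simp]: "x \<in> R \<Longrightarrow> neg x \<in> R"
  and mul_closed [simp]: "x \<in> R \<Longrightarrow> y \<in> R \<Longrightarrow> mul x y \<in> R"
  using multiring unfolding multiring_def by (elim conjE, metis)+

lemma add_reverse_left:
  "x \<in> R \<Longrightarrow> y \<in> R \<Longrightarrow> z \<in> R \<Longrightarrow> z \<in> add x y \<Longrightarrow> x \<in> add z (neg y)"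
  and add_reverse_right:
  "x \<in> R \<Longrightarrow> y \<in> R \<Longrightarrow> z \<in> R \<Longrightarrow> z \<in> add x y \<Longrightarrow> y \<in> add (neg x) z"
  using multiring unfolding multiring_def by (elim conjE, metis)+

lemma mem_zero_add_iff: "x \<in> R \<Longrightarrow> y \<in> R \<Longrightarrow> y \<in> add zero x \<longleftrightarrow> y = x"
  using multiring unfolding multiring_def by (elim conjE) metis

lemma add_commute: "x \<in> R \<Longrightarrow> y \<in> R \<Longrightarrow> add x y = add y x"
  using multiring unfolding multiring_def by (elim conjE) metis

lemma mul_assoc: "x \<in> R \<Longrightarrow> y \<in> R \<Longrightarrow> z \<in> R \<Longrightarrow> mul (mul x y) z = mul x (mul y z)"
  and mul_commute: "x \<in> R \<Longrightarrow> y \<in> R \<Longrightarrow> mul x y = mul y x"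
  and mul_un_left [simp]: "x \<in> R \<Longrightarrow> mul un x = x"
  and mul_zero_right [simp]: "x \<in> R \<Longrightarrow> mul x zero = zero"
  using multiring unfolding multiring_def by (elim conjE, metis)+

lemma mul_left_commute: "x \<in> R \<Longrightarrow> y \<in> R \<Longrightarrow> z \<in> R \<Longrightarrow> mul x (mul y z) = mul y (mul x z)"
  by (metis mul_assoc mul_commute)

lemmas mul_ac = mul_assoc mul_commute mul_left_commute

lemma mul_un_right [simp]: "x \<in> R \<Longrightarrow> mul x un = x"
  by (metis mul_un_left mul_commute un_closed)

lemma mul_zero_left [simp]: "x \<in> R \<Longrightarrow> mul zero x = zero"
  by (metis mul_zero_right mul_commute zero_closed)

lemma mem_add_mul_right:
  "a \<in> R \<Longrightarrow> b \<in> R \<Longrightarrow> c \<in> R \<Longrightarrow> d \<in> R \<Longrightarrow> c \<in> add a b \<Longrightarrow> mul c d \<in> add (mul a d) (mul b d)"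
  using multiring unfolding multiring_def by (elim conjE) metis

lemma zero_mem_add_neg: "x \<in> R \<Longrightarrow> zero \<in> add x (neg x)"
  using add_reverse_left[of zero x x] by (simp add: mem_zero_add_iff)

lemma neg_neg [simp]: "x \<in> R \<Longrightarrow> neg (neg x) = x"
  using add_reverse_left[of x "neg x" zero] zero_mem_add_neg mem_zero_add_iff by simp

lemma neg_zero [simp]: "neg zero = zero"
  using zero_mem_add_neg[of zero] add_reverse_right[of zero zero zero] mem_zero_add_iff by simp

lemma neg_eq_mul_neg_un: "x \<in> R \<Longrightarrow> neg x = mul (neg un) x"
proof -
  assume x: "x \<in> R"
  have "zero \<in> add x (mul (neg un) x)"
    using mem_add_mul_right[of un "neg un" zero x] x zero_mem_add_neg[of un] by simp
  then have "x \<in> add zero (neg (mul (neg un) x))"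
    using add_reverse_left[of x "mul (neg un) x" zero] x by simp
  then have "x = neg (mul (neg un) x)"
    using x by (simp add: mem_zero_add_iff)
  then show ?thesis
    using x neg_neg[of "mul (neg un) x"] by simp
qed

end

locale special_multifield_structure = multiring_structure +
  assumes special: "special_multifield R add mul neg zero un"
begin

abbreviation nonzero :: "'a set" where "nonzero \<equiv> R - {zero}"

lemma un_ne_zero [simp]: "un \<noteq> zero"
  using special unfolding special_multifield_def multifield_def by (elim conjE) (rule not_sym)

lemma mul_self [simp]: "a \<in> nonzero \<Longrightarrow> mul a a = un"
  using special unfolding special_multifield_def Let_def by (elim conjE) (drule bspec)

lemma add_neg_self: "a \<in> nonzero \<Longrightarrow> add a (neg a) = R"
  using special unfolding special_multifield_def Let_def by (elim conjE) (drule bspec)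

lemma mul_self_left [simp]: "a \<in> nonzero \<Longrightarrow> b \<in> R \<Longrightarrow> mul a (mul a b) = b"
  using mul_assoc[of a a b] by simp

lemma mul_ne_zero [simp]: "a \<in> nonzero \<Longrightarrow> b \<in> nonzero \<Longrightarrow> mul a b \<noteq> zero"
proof
  assume a: "a \<in> nonzero" and b: "b \<in> nonzero" and "mul a b = zero"
  then have "b = mul a zero"
    using mul_self_left[OF a, of b] by simp
  then show False
    using a b by simp
qed

lemma mul_nonzero: "a \<in> nonzero \<Longrightarrow> b \<in> nonzero \<Longrightarrow> mul a b \<in> nonzero"
  by simp

lemma neg_un_ne_zero [simp]: "neg un \<noteq> zero"
proof
  assume "neg un = zero"
  then have "un = neg zero"
    using neg_neg[of un] by simp
  then show False
    using un_ne_zero by simp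
qed

lemma mem_add_self: "a \<in> nonzero \<Longrightarrow> b \<in> nonzero \<Longrightarrow> a \<in> add a b"
proof -
  assume a: "a \<in> nonzero" and b: "b \<in> nonzero"
  define t where "t = mul a b"
  have t: "t \<in> nonzero"
    using a b by (simp add: t_def)
  have "un \<in> add t (neg t)"
    using add_neg_self[OF t] by simp
  then have "t \<in> add un t"
    using add_reverse_left[of t "neg t" un] t by simp
  then have "mul t b \<in> add b (mul t b)"
    using mem_add_mul_right[of un t t b] t b by simp
  moreover have "mul t b = a"
    using a b by (simp add: t_def mul_ac)
  ultimately show ?thesis
    using a b add_commute by auto
qed

definition iso :: "'a \<Rightarrow> 'a \<Rightarrow> 'a \<Rightarrow> 'a \<Rightarrow> bool" where
  "iso a b c d \<longleftrightarrow> a \<in> nonzero \<and> b \<in> nonzero \<and> c \<in> nonzero \<and> d \<in> nonzero \<and>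
                    mul a b = mul c d \<and> a \<in> add c d"

lemma iso_nonzero: "iso a b c d \<Longrightarrow> a \<in> nonzero \<and> b \<in> nonzero \<and> c \<in> nonzero \<and> d \<in> nonzero"
  and iso_mul_eq: "iso a b c d \<Longrightarrow> mul a b = mul c d"
  unfolding iso_def by simp_all

lemma iso_refl: "a \<in> nonzero \<Longrightarrow> b \<in> nonzero \<Longrightarrow> iso a b a b"
  unfolding iso_def by (simp add: mem_add_self)

lemma iso_sym:
  assumes "iso a b c d"
  shows "iso c d a b"
proof -
  have axiom: "\<forall>a\<in>nonzero. \<forall>b\<in>nonzero. \<forall>c\<in>nonzero. \<forall>d\<in>nonzero.
                 mul a b = mul c d \<and> a \<in> add c d \<longrightarrow> c \<in> add a b"
    using special unfolding special_multifield_def Let_def by blast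
  from assms have "a \<in> nonzero" "b \<in> nonzero" "c \<in> nonzero" "d \<in> nonzero"
    and "mul a b = mul c d" "a \<in> add c d"
    unfolding iso_def by auto
  with axiom have "c \<in> add a b"
    by blast
  then show ?thesis
    using assms unfolding iso_def by auto
qed

lemma iso_trans:
  assumes "iso a b c d" and "iso c d e f"
  shows "iso a b e f"
proof -
  have axiom: "\<forall>a\<in>nonzero. \<forall>b\<in>nonzero. \<forall>c\<in>nonzero. \<forall>d\<in>nonzero. \<forall>e\<in>nonzero. \<forall>f\<in>nonzero.
                 mul a b = mul c d \<and> mul c d = mul e f \<and> a \<in> add c d \<and> c \<in> add e f \<longrightarrow>
                 a \<in> add e f"
    using special unfolding special_multifield_def Let_def by blast
  from assms have "a \<in> nonzero" "b \<in> nonzero" "c \<in> nonzero" "d \<in> nonzero"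
    "e \<in> nonzero" "f \<in> nonzero" and "mul a b = mul c d" "mul c d = mul e f"
    and "a \<in> add c d" "c \<in> add e f"
    unfolding iso_def by auto
  with axiom have "a \<in> add e f"
    by blast
  then show ?thesis
    using assms unfolding iso_def by auto
qed

lemma iso_commute: "a \<in> nonzero \<Longrightarrow> b \<in> nonzero \<Longrightarrow> iso a b b a"
  unfolding iso_def by (simp add: mem_add_self add_commute[of b a] mul_commute[of a b])

lemma iso_swap_left:
  assumes "iso a b c d"
  shows "iso b a c d"
proof -
  have "iso b a a b"
    using assms iso_commute unfolding iso_def by blast
  then show ?thesis
    using assms by (rule iso_trans)
qed

lemma iso_swap_right: "iso a b c d \<Longrightarrow> iso a b d c"
  unfolding iso_def by (simp add: add_commute[of d c] mul_commute[of d c])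

lemma iso_scale: "g \<in> nonzero \<Longrightarrow> iso a b c d \<Longrightarrow> iso (mul g a) (mul g b) (mul g c) (mul g d)"
proof -
  assume g: "g \<in> nonzero" and "iso a b c d"
  then have nz: "a \<in> nonzero" "b \<in> nonzero" "c \<in> nonzero" "d \<in> nonzero"
    and prod: "mul a b = mul c d" and sum: "a \<in> add c d"
    unfolding iso_def by auto
  have "mul a g \<in> add (mul c g) (mul d g)"
    using mem_add_mul_right[OF _ _ _ _ sum] nz g by simp
  then have "mul g a \<in> add (mul g c) (mul g d)"
    using nz g by (simp add: mul_commute[of _ g])
  moreover have "mul (mul g a) (mul g b) = mul (mul g c) (mul g d)"
    using nz g prod by (simp add: mul_ac)
  ultimately show ?thesis
    unfolding iso_def using nz g by simp
qed

lemma iso_neg_un: "a \<in> nonzero \<Longrightarrow> iso a (mul (neg un) a) un (neg un)"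
  unfolding iso_def using add_neg_self[of un] by (auto simp: mul_ac)

lemma iso_neg_cross: "iso a b c d \<Longrightarrow> iso a (mul (neg un) c) (mul (neg un) b) d"
proof -
  assume "iso a b c d"
  then have nz: "a \<in> nonzero" "b \<in> nonzero" "c \<in> nonzero" "d \<in> nonzero"
    and prod: "mul a b = mul c d" and sum: "a \<in> add c d"
    unfolding iso_def by auto
  have n: "neg un \<in> nonzero" by simp
  have "mul a c = mul (mul a b) (mul b c)"
    using nz by (simp add: mul_ac)
  also have "\<dots> = mul (mul c d) (mul b c)"
    using prod by simp
  also have "\<dots> = mul d b"
    using nz by (simp add: mul_ac)
  finally have ac: "mul a c = mul d b" .
  have "d \<in> add (neg c) a"
    using add_reverse_right[OF _ _ _ sum] nz by simp
  \<comment> \<open>multiplying by \<open>ad\<close> turns \<open>d \<in> -c + a\<close> into \<open>a \<in> -b + d\<close>, since \<open>acd = b\<close>\<close>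
  then have "mul d (mul a d) \<in> add (mul (neg c) (mul a d)) (mul a (mul a d))"
    using mem_add_mul_right[of "neg c" a d "mul a d"] nz by simp
  moreover have "mul d (mul a d) = a" "mul a (mul a d) = d"
    using nz by (simp_all add: mul_ac)
  moreover have "mul (neg c) (mul a d) = mul (neg un) b"
  proof -
    have "mul (neg c) (mul a d) = mul (neg un) (mul (mul a c) d)"
      using nz n by (simp add: neg_eq_mul_neg_un[of c] mul_ac)
    also have "\<dots> = mul (neg un) b"
      using nz n by (simp add: ac mul_ac)
    finally show ?thesis .
  qed
  ultimately have "a \<in> add (mul (neg un) b) d"
    by simp
  moreover have "mul a (mul (neg un) c) = mul (mul (neg un) b) d"
  proof -
    have "mul a (mul (neg un) c) = mul (neg un) (mul a c)"
      using nz n by (simp add: mul_ac)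
    also have "\<dots> = mul (mul (neg un) b) d"
      using nz n by (simp add: ac mul_ac)
    finally show ?thesis .
  qed
  ultimately show ?thesis
    unfolding iso_def using nz n by simp
qed

lemma special_axiom5:
  assumes "a \<in> nonzero" "b \<in> nonzero" "c \<in> nonzero" "d \<in> nonzero"
    and "x \<in> nonzero" "y \<in> nonzero" "z \<in> nonzero"
    and "mul a x = mul c y" "a = mul x z" "c = mul y z"
    and "a \<in> add c y" "b \<in> add x z" "d \<in> add y z"
  obtains t v w where "t \<in> nonzero" "v \<in> nonzero" "w \<in> nonzero"
    "mul b t = mul c v" "b = mul t w" "c = mul v w"
    "b \<in> add c v" "a \<in> add t w" "d \<in> add v w"
proof -
  have "\<forall>a\<in>nonzero. \<forall>b\<in>nonzero. \<forall>c\<in>nonzero. \<forall>d\<in>nonzero.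
          (\<exists>x\<in>nonzero. \<exists>y\<in>nonzero. \<exists>z\<in>nonzero. mul a x = mul c y \<and> a = mul x z \<and> c = mul y z \<and>
               a \<in> add c y \<and> b \<in> add x z \<and> d \<in> add y z)
          \<longrightarrow> (\<exists>t\<in>nonzero. \<exists>v\<in>nonzero. \<exists>w\<in>nonzero. mul b t = mul c v \<and> b = mul t w \<and> c = mul v w \<and>
               b \<in> add c v \<and> a \<in> add t w \<and> d \<in> add v w)"
    using special unfolding special_multifield_def Let_def by blast
  with assms that show thesis
    by blast
qed

definition iso3 :: "'a \<Rightarrow> 'a \<Rightarrow> 'a \<Rightarrow> 'a \<Rightarrow> 'a \<Rightarrow> 'a \<Rightarrow> bool" where
  "iso3 a1 a2 a3 b1 b2 b3 \<longleftrightarrow> (\<exists>x\<in>nonzero. \<exists>y\<in>nonzero. \<exists>z\<in>nonzero.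
      iso a1 x b1 y \<and> iso a2 a3 x z \<and> iso b2 b3 y z)"

lemma iso3_nonzero:
  "iso3 a1 a2 a3 b1 b2 b3 \<Longrightarrow> a1 \<in> nonzero \<and> a2 \<in> nonzero \<and> a3 \<in> nonzero \<and>
     b1 \<in> nonzero \<and> b2 \<in> nonzero \<and> b3 \<in> nonzero"
  unfolding iso3_def iso_def by blast

lemma iso3_sym: "iso3 a1 a2 a3 b1 b2 b3 \<Longrightarrow> iso3 b1 b2 b3 a1 a2 a3"
  unfolding iso3_def by (meson iso_sym)

lemma iso3_swap23: "iso3 a1 a2 a3 b1 b2 b3 \<Longrightarrow> iso3 a1 a3 a2 b1 b2 b3"
  unfolding iso3_def by (meson iso_swap_left)

lemma iso3_replace23:
  "iso3 a1 a2 a3 b1 b2 b3 \<Longrightarrow> iso b2 b3 c2 c3 \<Longrightarrow> iso3 a1 a2 a3 b1 c2 c3"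
  unfolding iso3_def by (meson iso_sym iso_trans)

lemma iso3_scale: "g \<in> nonzero \<Longrightarrow> iso3 a1 a2 a3 b1 b2 b3 \<Longrightarrow>
   iso3 (mul g a1) (mul g a2) (mul g a3) (mul g b1) (mul g b2) (mul g b3)"
  unfolding iso3_def by (meson iso_scale mul_nonzero)

lemma iso3_prod_eq: "iso3 a1 a2 a3 b1 b2 b3 \<Longrightarrow> mul a1 (mul a2 a3) = mul b1 (mul b2 b3)"
  unfolding iso3_def iso_def by (metis DiffD1 mul_assoc)

lemma iso3_swap12_normalized:
  assumes iso3: "iso3 a1 a2 a3 b1 b2 b3" and prod: "mul a1 (mul a2 a3) = un"
  shows "iso3 a2 a1 a3 b1 b2 b3"
proof -
  note nz = iso3_nonzero[OF iso3]
  obtain x y z where xyz: "x \<in> nonzero" "y \<in> nonzero" "z \<in> nonzero"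
    and first: "mul a1 x = mul b1 y" "a1 \<in> add b1 y"
    and second: "mul a2 a3 = mul x z" "a2 \<in> add x z"
    and third: "mul b2 b3 = mul y z" "b2 \<in> add y z"
    using iso3 unfolding iso3_def iso_def by blast
  have prod_b: "mul b1 (mul b2 b3) = un"
    using iso3_prod_eq[OF iso3] prod by simp
  have a23: "mul a2 a3 = a1"
    using mul_self_left[of a1 "mul a2 a3"] prod nz by simp
  have b23: "mul b2 b3 = b1"
    using mul_self_left[of b1 "mul b2 b3"] prod_b nz by simp
  have "mul a1 a3 = mul a2 (mul a2 (mul a1 a3))"
    using nz by simp
  also have "\<dots> = mul a2 (mul a1 (mul a2 a3))"
    using nz by (simp add: mul_left_commute[of a1 a2 a3])
  finally have a13: "mul a1 a3 = a2"
    using prod nz by simp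
  obtain t v w where tvw: "t \<in> nonzero" "v \<in> nonzero" "w \<in> nonzero"
    "mul a2 t = mul b1 v" "a2 = mul t w" "b1 = mul v w"
    "a2 \<in> add b1 v" "a1 \<in> add t w" "b2 \<in> add v w"
    using special_axiom5[of a1 a2 b1 b2 x y z] nz xyz first second(2) third(2)
      a23 second(1) b23 third(1) by metis
  have "iso a2 t b1 v" "iso a1 a3 t w" "iso b2 b3 v w"
    unfolding iso_def using tvw nz a13 b23 by auto
  then show ?thesis
    unfolding iso3_def using tvw by blast
qed

lemma iso3_swap12: "iso3 a1 a2 a3 b1 b2 b3 \<Longrightarrow> iso3 a2 a1 a3 b1 b2 b3"
proof -
  assume iso3: "iso3 a1 a2 a3 b1 b2 b3"
  note nz = iso3_nonzero[OF iso3]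
  define p where "p = mul a1 (mul a2 a3)"
  have p: "p \<in> nonzero"
    using nz by (simp add: p_def)
  have "mul (mul p a1) (mul (mul p a2) (mul p a3)) = un"
    using nz by (simp add: p_def mul_ac)
  then have "iso3 (mul p a2) (mul p a1) (mul p a3) (mul p b1) (mul p b2) (mul p b3)"
    using iso3_swap12_normalized iso3_scale[OF p iso3] by blast
  from iso3_scale[OF p this] show ?thesis
    using p nz by simp
qed

lemma iso3_reverse_right: "iso3 a1 a2 a3 b1 b2 b3 \<Longrightarrow> iso3 a1 a2 a3 b3 b2 b1"
  by (rule iso3_sym, rule iso3_swap12, rule iso3_swap23, rule iso3_swap12, rule iso3_sym)

lemma iso3_replace12:
  assumes "iso3 a1 a2 a3 b1 b2 b3" and "iso b1 b2 c1 c2"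
  shows "iso3 a1 a2 a3 c1 c2 b3"
proof -
  have "iso b2 b1 c2 c1"
    using assms(2) by (rule iso_swap_left[OF iso_swap_right])
  with iso3_reverse_right[OF assms(1)] have "iso3 a1 a2 a3 b3 c2 c1"
    by (rule iso3_replace23)
  then show ?thesis
    by (rule iso3_reverse_right)
qed

lemma iso3_trans:
  assumes ab: "iso3 a1 a2 a3 b1 b2 b3" and bc: "iso3 b1 b2 b3 c1 c2 c3"
  shows "iso3 a1 a2 a3 c1 c2 c3"
proof -
  obtain x y z where "iso b1 x c1 y" "iso b2 b3 x z" "iso c2 c3 y z"
    using bc unfolding iso3_def by blast
  then have "iso3 a1 a2 a3 c1 y z"
    using iso3_replace12[OF iso3_replace23[OF ab]] by blast
  then show ?thesis
    using iso3_replace23 iso_sym \<open>iso c2 c3 y z\<close> by blast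
qed

lemma special_group_iso: "special_group nonzero mul un (neg un) (\<lambda>(a, b) (c, d). iso a b c d)"
  unfolding special_group_def
proof (intro conjI)
  show "group \<lparr>carrier = nonzero, mult = mul, one = un\<rparr>"
    by (rule groupI) (auto simp: mul_assoc intro: mul_self)
  have iso3_eq: "sg_eq3 nonzero (\<lambda>(a, b) (c, d). iso a b c d) (a1, a2, a3) (b1, b2, b3) \<longleftrightarrow>
      iso3 a1 a2 a3 b1 b2 b3" for a1 a2 a3 b1 b2 b3
    unfolding sg_eq3_def iso3_def by simp
  show "\<forall>p\<in>nonzero \<times> nonzero \<times> nonzero. \<forall>q\<in>nonzero \<times> nonzero \<times> nonzero.
      \<forall>r\<in>nonzero \<times> nonzero \<times> nonzero.
        sg_eq3 nonzero (\<lambda>(a, b) (c, d). iso a b c d) p q \<and>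
        sg_eq3 nonzero (\<lambda>(a, b) (c, d). iso a b c d) q r \<longrightarrow>
        sg_eq3 nonzero (\<lambda>(a, b) (c, d). iso a b c d) p r"
    by (clarsimp simp only: iso3_eq) (erule (1) iso3_trans)
qed (auto dest: iso_nonzero iso_mul_eq intro: iso_refl iso_commute iso_neg_un iso_neg_cross iso_scale
     iso_sym iso_trans)

end

theorem theorem5p10:
  assumes "special_multifield F add mul neg zero un"
  shows "special_group (F - {zero}) mul un (neg un)
           (\<lambda>(a, b) (c, d). a \<in> F - {zero} \<and> b \<in> F - {zero} \<and> c \<in> F - {zero} \<and> d \<in> F - {zero} \<and>
                            mul a b = mul c d \<and> a \<in> add c d)"
proof -
  interpret special_multifield_structure F add mul neg zero un
    using assms by unfold_locales (simp_all add: special_multifield_def multifield_def)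
  show ?thesis
    using special_group_iso unfolding iso_def .
qed

end
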